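(* Even for two teams and nonnegative-value players, there does not necessarily exist an allocation that is both balanced and individually stable.
   Context: Setting: teams $T=[n]$, players $P=\{p_1,\dots,p_m\}$. Each player $p$ has a complete, transitive weak preference $\succsim_p$ over $T$ (strict part $\succ_p$). Each team $i$ has an additive valuation $v_i:2^P\to\mathbb{R}$, $v_i(S)=\sum_{p\in S}v_i(p)$; nonnegative-value players means $v_i(p)\ge 0$ for all $i,p$. An allocation $A=(A_1,\dots,A_n)$ is an ordered partition of $P$ into $n$ (possibly empty) parts. $A$ is balanced if $\big||A_i|-|A_j|\big|\le1$ for all $i,j$. Given $A$, a deviation of a player $p\in A_i$ to another team $j$ (moving $p$ from $A_i$ to $A_j$) is a beneficial deviation if $j\succ_p i$, $v_i(A_i\setminus\{p\})\ge v_i(A_i)$ and $v_j(A_j\cup\{p\})\ge v_j(A_j)$. $A$ is individually stable if it admits no beneficial deviation. *)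

theory Defs
  imports Complex_Main
begin

(* Teams are 0..<n (the paper's [n] = {1..n}, shifted). Players form a finite set P.
   pref p i j  means  i \<succsim>_p j  (team i weakly preferred to team j by player p).
   v i p  is the (additive) value of player p for team i. *)

definition weak_pref_order :: "nat \<Rightarrow> ('p \<Rightarrow> nat \<Rightarrow> nat \<Rightarrow> bool) \<Rightarrow> 'p set \<Rightarrow> bool" where
  "weak_pref_order n pref P \<longleftrightarrow>
     (\<forall>p\<in>P. (\<forall>i<n. \<forall>j<n. pref p i j \<or> pref p j i) \<and>
             (\<forall>i<n. \<forall>j<n. \<forall>k<n. pref p i j \<longrightarrow> pref p j k \<longrightarrow> pref p i k))"

definition strict_pref :: "('p \<Rightarrow> nat \<Rightarrow> nat \<Rightarrow> bool) \<Rightarrow> 'p \<Rightarrow> nat \<Rightarrow> nat \<Rightarrow> bool" where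
  "strict_pref pref p i j \<longleftrightarrow> pref p i j \<and> \<not> pref p j i"

definition add_val :: "(nat \<Rightarrow> 'p \<Rightarrow> real) \<Rightarrow> nat \<Rightarrow> 'p set \<Rightarrow> real" where
  "add_val v i S = (\<Sum>p\<in>S. v i p)"

definition allocation :: "nat \<Rightarrow> 'p set \<Rightarrow> (nat \<Rightarrow> 'p set) \<Rightarrow> bool" where
  "allocation n P A \<longleftrightarrow>
     (\<Union>i\<in>{..<n}. A i) = P \<and> (\<forall>i<n. \<forall>j<n. i \<noteq> j \<longrightarrow> A i \<inter> A j = {})"

definition balanced :: "nat \<Rightarrow> (nat \<Rightarrow> 'p set) \<Rightarrow> bool" where
  "balanced n A \<longleftrightarrow> (\<forall>i<n. \<forall>j<n. \<bar>int (card (A i)) - int (card (A j))\<bar> \<le> 1)"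

definition beneficial_deviation ::
  "('p \<Rightarrow> nat \<Rightarrow> nat \<Rightarrow> bool) \<Rightarrow> (nat \<Rightarrow> 'p \<Rightarrow> real) \<Rightarrow> (nat \<Rightarrow> 'p set) \<Rightarrow> 'p \<Rightarrow> nat \<Rightarrow> nat \<Rightarrow> bool" where
  "beneficial_deviation pref v A p i j \<longleftrightarrow>
     p \<in> A i \<and> strict_pref pref p j i \<and>
     add_val v i (A i - {p}) \<ge> add_val v i (A i) \<and>
     add_val v j (A j \<union> {p}) \<ge> add_val v j (A j)"

definition individually_stable ::
  "nat \<Rightarrow> ('p \<Rightarrow> nat \<Rightarrow> nat \<Rightarrow> bool) \<Rightarrow> (nat \<Rightarrow> 'p \<Rightarrow> real) \<Rightarrow> (nat \<Rightarrow> 'p set) \<Rightarrow> bool" where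
  "individually_stable n pref v A \<longleftrightarrow>
     \<not> (\<exists>p i j. i < n \<and> j < n \<and> i \<noteq> j \<and> beneficial_deviation pref v A p i j)"

end

theory Submission
  imports Defs
begin

text \<open>With nonnegative values a team lets a player go only if it values the player at zero.
  So take two players worth nothing to either team who both strictly prefer team 0:
  balance forces one of them into team 1, and that player deviates to team 0.\<close>

lemma beneficial_deviation_zero_valuation:
  assumes "p \<in> A i" and "strict_pref pref p j i"
  shows "beneficial_deviation pref (\<lambda>_ _. 0) A p i j"
  using assms unfolding beneficial_deviation_def add_val_def by simp

lemma balanced_allocation_team_nonempty:
  assumes alloc: "allocation n P A" and bal: "balanced n A"
    and many: "n \<le> card P" and i: "i < n"
  shows "A i \<noteq> {}"
proof
  assume empty: "A i = {}"
  have small: "card (A j) \<le> 1" if "j < n" for j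
    using bal i that empty unfolding balanced_def by force
  have "card P \<le> (\<Sum>j<n. card (A j))"
    using alloc card_UN_le[of "{..<n}" A] unfolding allocation_def by simp
  also have "\<dots> = card (A i) + (\<Sum>j\<in>{..<n} - {i}. card (A j))"
    using i by (simp add: sum.remove)
  also have "\<dots> \<le> card ({..<n} - {i})"
    using empty small sum_mono[of "{..<n} - {i}" "\<lambda>j. card (A j)" "\<lambda>_. 1"] by simp
  also have "\<dots> < n"
    using i by simp
  finally show False
    using many by simp
qed

theorem proposition4:
  shows "\<exists>(P :: nat set) (pref :: nat \<Rightarrow> nat \<Rightarrow> nat \<Rightarrow> bool) (v :: nat \<Rightarrow> nat \<Rightarrow> real).
           finite P \<and> weak_pref_order 2 pref P \<and>
           (\<forall>i<2. \<forall>p\<in>P. v i p \<ge> 0) \<and>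
           \<not> (\<exists>A. allocation 2 P A \<and> balanced 2 A \<and> individually_stable 2 pref v A)"
proof (intro exI conjI)
  let ?P = "{0::nat, 1}"
  let ?pref = "\<lambda>(p::nat) (i::nat) (j::nat). i \<le> j"
  let ?v = "\<lambda>(i::nat) (p::nat). 0::real"
  show "finite ?P" by simp
  show "weak_pref_order 2 ?pref ?P" unfolding weak_pref_order_def by auto
  show "\<forall>i<2. \<forall>p\<in>?P. ?v i p \<ge> 0" by simp
  show "\<not> (\<exists>A. allocation 2 ?P A \<and> balanced 2 A \<and> individually_stable 2 ?pref ?v A)"
  proof
    assume "\<exists>A. allocation 2 ?P A \<and> balanced 2 A \<and> individually_stable 2 ?pref ?v A"
    then obtain A where "allocation 2 ?P A" "balanced 2 A"
      and stable: "individually_stable 2 ?pref ?v A" by blast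
    then have "A 1 \<noteq> {}"
      using balanced_allocation_team_nonempty[of 2 ?P A 1] by simp
    then obtain p where "p \<in> A 1" by blast
    moreover have "strict_pref ?pref p 0 1"
      unfolding strict_pref_def by simp
    ultimately have "beneficial_deviation ?pref ?v A p 1 0"
      by (rule beneficial_deviation_zero_valuation)
    moreover have "(1::nat) < 2" "(0::nat) < 2" "(1::nat) \<noteq> 0" by simp_all
    ultimately show False
      using stable unfolding individually_stable_def by blast
  qed
qed

end
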